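(* Let $\omega$ be a primitive third root of unity, $S=\mathbb{C}\langle x,y,z\rangle/(x^2,y^2,z^2)$, and for $[A:B]\in\mathbb{P}^1$ let $T_{[A:B]}$ be the quotient of $S$ by the two-sided ideal generated by $$A(zxy+\omega xyz+\omega^2 yzx)+B(yxz+\omega zyx+\omega^2 xzy),\qquad A(zxy+\omega^2 xyz+\omega yzx)+B(yxz+\omega^2 zyx+\omega xzy).$$ Let the Heisenberg group $H_3$ act on $T_{[A:B]}$ by the graded automorphisms determined by $e_1\cdot x=z,\ e_1\cdot y=x,\ e_1\cdot z=y$ and $e_2\cdot x=x,\ e_2\cdot y=\omega y,\ e_2\cdot z=\omega^2 z$. Then for every $[A:B]\in\mathbb{P}^1$ there exists a nonzero central element of degree 3 in $T_{[A:B]}$ which is fixed by $H_3$.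
   Context: $H_3=\langle e_1,e_2\mid [e_1,e_2]\text{ central},\ e_1^3=e_2^3=1\rangle$ is the Heisenberg group of order 27. The given action preserves the defining ideal, so it induces an action on $T_{[A:B]}$. In the paper the parametrization is written via $t=B/A\in\mathbb{P}^1$ (points of the diagonal $\Delta\subset\mathbb{P}^1\times\mathbb{P}^1$). *)

theory Defs
  imports Complex_Main
begin

text \<open>The free associative algebra C<x,y,z>: elements are finitely supported
  functions from words over the three generators to complex coefficients.\<close>

datatype gen = X | Y | Z

type_synonym ncp = "gen list \<Rightarrow> complex"

definition nc_fin :: "ncp \<Rightarrow> bool" where
  "nc_fin p \<longleftrightarrow> finite {w. p w \<noteq> 0}"

definition nc_add :: "ncp \<Rightarrow> ncp \<Rightarrow> ncp" where
  "nc_add p q = (\<lambda>w. p w + q w)"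

definition nc_diff :: "ncp \<Rightarrow> ncp \<Rightarrow> ncp" where
  "nc_diff p q = (\<lambda>w. p w - q w)"

definition nc_scale :: "complex \<Rightarrow> ncp \<Rightarrow> ncp" where
  "nc_scale c p = (\<lambda>w. c * p w)"

definition nc_zero :: ncp where
  "nc_zero = (\<lambda>w. 0)"

definition nc_one :: ncp where
  "nc_one = (\<lambda>w. if w = [] then 1 else 0)"

definition nc_mul :: "ncp \<Rightarrow> ncp \<Rightarrow> ncp" where
  "nc_mul p q = (\<lambda>w. \<Sum>i\<le>length w. p (take i w) * q (drop i w))"

definition nc_var :: "gen \<Rightarrow> ncp" where
  "nc_var v = (\<lambda>w. if w = [v] then 1 else 0)"

definition nc_prodlist :: "ncp list \<Rightarrow> ncp" where
  "nc_prodlist ps = foldr nc_mul ps nc_one"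

definition nc_lin :: "(complex \<times> gen list) list \<Rightarrow> ncp" where
  "nc_lin cs = (\<lambda>w. \<Sum>(c,u)\<leftarrow>cs. if u = w then c else 0)"

definition nc_subst :: "(gen \<Rightarrow> ncp) \<Rightarrow> ncp \<Rightarrow> ncp" where
  "nc_subst f p = (\<lambda>u. \<Sum>w\<in>{w. p w \<noteq> 0}. p w * nc_prodlist (map f w) u)"

inductive_set nc_ideal :: "ncp set \<Rightarrow> ncp set" for G where
  zero: "nc_zero \<in> nc_ideal G"
| step: "h \<in> nc_ideal G \<Longrightarrow> g \<in> G \<Longrightarrow> nc_fin a \<Longrightarrow> nc_fin b
         \<Longrightarrow> nc_add h (nc_mul (nc_mul a g) b) \<in> nc_ideal G"

definition rel1 :: "complex \<Rightarrow> complex \<Rightarrow> complex \<Rightarrow> ncp" where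
  "rel1 \<omega> A B = nc_lin
     [(A, [Z,X,Y]), (A*\<omega>, [X,Y,Z]), (A*\<omega>^2, [Y,Z,X]),
      (B, [Y,X,Z]), (B*\<omega>, [Z,Y,X]), (B*\<omega>^2, [X,Z,Y])]"

definition rel2 :: "complex \<Rightarrow> complex \<Rightarrow> complex \<Rightarrow> ncp" where
  "rel2 \<omega> A B = nc_lin
     [(A, [Z,X,Y]), (A*\<omega>^2, [X,Y,Z]), (A*\<omega>, [Y,Z,X]),
      (B, [Y,X,Z]), (B*\<omega>^2, [Z,Y,X]), (B*\<omega>, [X,Z,Y])]"

definition T_ideal :: "complex \<Rightarrow> complex \<Rightarrow> complex \<Rightarrow> ncp set" where
  "T_ideal \<omega> A B = nc_ideal
     {nc_lin [(1,[X,X])], nc_lin [(1,[Y,Y])], nc_lin [(1,[Z,Z])],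
      rel1 \<omega> A B, rel2 \<omega> A B}"

definition e1_act :: "gen \<Rightarrow> ncp" where
  "e1_act v = (case v of X \<Rightarrow> nc_var Z | Y \<Rightarrow> nc_var X | Z \<Rightarrow> nc_var Y)"

definition e2_act :: "complex \<Rightarrow> gen \<Rightarrow> ncp" where
  "e2_act \<omega> v = (case v of X \<Rightarrow> nc_var X | Y \<Rightarrow> nc_scale \<omega> (nc_var Y)
                    | Z \<Rightarrow> nc_scale (\<omega>^2) (nc_var Z))"

definition homog :: "nat \<Rightarrow> ncp \<Rightarrow> bool" where
  "homog d p \<longleftrightarrow> (\<forall>w. length w \<noteq> d \<longrightarrow> p w = 0)"

end

theory Submission
  imports Defs
begin

text \<open>The witness is the cubic \<open>A (xyz + zxy + yzx) + B (xzy + zyx + yxz)\<close>.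
  Its commutator with each generator is an explicit two-sided combination of the
  defining relations; since \<open>[p, -]\<close> is a derivation, commuting with the generators
  modulo an ideal propagates to all polynomials. The generator \<open>e\<^sub>1\<close> permutes the
  monomials within each cyclic orbit, and \<open>e\<^sub>2\<close> multiplies every monomial containing
  each of \<open>x, y, z\<close> once by \<open>\<omega>^(0+1+2) = 1\<close>. Finally, the sum of the coefficients over the
  cyclic orbit of \<open>xyz\<close> (resp. \<open>xzy\<close>) vanishes on the ideal: the cubic relations
  contribute \<open>A (1 + \<omega> + \<omega>\<^sup>2) = 0\<close> and the squares only reach words containing a
  square. On the witness these sums are \<open>3A\<close> and \<open>3B\<close>.\<close>

definition lin_mul ::
  "(complex \<times> gen list) list \<Rightarrow> (complex \<times> gen list) list \<Rightarrow> (complex \<times> gen list) list" where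
  "lin_mul xs ys = concat (map (\<lambda>(c,u). map (\<lambda>(d,v). (c*d, u@v)) ys) xs)"

definition lin_scale :: "complex \<Rightarrow> (complex \<times> gen list) list \<Rightarrow> (complex \<times> gen list) list" where
  "lin_scale c xs = map (\<lambda>(d,v). (c*d, v)) xs"

lemma nc_lin_single: "nc_lin [(c,u)] = (\<lambda>w. if w = u then c else 0)"
  by (auto simp: nc_lin_def)

lemma nc_lin_append: "nc_lin (xs @ ys) = nc_add (nc_lin xs) (nc_lin ys)"
  by (auto simp: nc_lin_def nc_add_def)

lemma nc_lin_scale: "nc_scale c (nc_lin xs) = nc_lin (lin_scale c xs)"
  unfolding nc_scale_def nc_lin_def lin_scale_def
  by (rule ext, induction xs) (auto simp: algebra_simps)

lemma nc_lin_diff: "nc_diff (nc_lin xs) (nc_lin ys) = nc_lin (xs @ lin_scale (-1) ys)"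
  by (simp add: nc_lin_append nc_lin_scale[symmetric] nc_add_def nc_diff_def nc_scale_def)

lemma nc_var_eq_lin: "nc_var v = nc_lin [(1,[v])]"
  by (auto simp: nc_var_def nc_lin_def)

lemma nc_one_eq_lin: "nc_one = nc_lin [(1,[])]"
  by (auto simp: nc_one_def nc_lin_def)

lemma nc_lin_eq_0_if_notin: "u \<notin> snd ` set xs \<Longrightarrow> nc_lin xs u = 0"
  unfolding nc_lin_def by (induction xs) auto

lemma nc_lin_eqI:
  assumes "\<And>u. u \<in> set (map snd xs @ map snd ys) \<Longrightarrow> nc_lin xs u = nc_lin ys u"
  shows "nc_lin xs = nc_lin ys"
proof
  fix u show "nc_lin xs u = nc_lin ys u"
    using assms nc_lin_eq_0_if_notin[of u xs] nc_lin_eq_0_if_notin[of u ys]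
    by (cases "u \<in> snd ` set xs \<union> snd ` set ys") auto
qed

lemma nc_fin_lin: "nc_fin (nc_lin xs)"
  unfolding nc_fin_def
  by (rule finite_subset[of _ "snd ` set xs"]) (use nc_lin_eq_0_if_notin in auto)

lemma nc_fin_scale: "nc_fin p \<Longrightarrow> nc_fin (nc_scale c p)"
  unfolding nc_fin_def nc_scale_def by (rule finite_subset[rotated]) auto

lemma nc_fin_mul:
  assumes "nc_fin p" "nc_fin q"
  shows "nc_fin (nc_mul p q)"
proof -
  have "{w. nc_mul p q w \<noteq> 0} \<subseteq> (\<lambda>(u,v). u @ v) ` ({w. p w \<noteq> 0} \<times> {w. q w \<noteq> 0})"
  proof
    fix w assume "w \<in> {w. nc_mul p q w \<noteq> 0}"
    then obtain i where "p (take i w) * q (drop i w) \<noteq> 0"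
      unfolding nc_mul_def by (auto elim: sum.not_neutral_contains_not_neutral)
    then show "w \<in> (\<lambda>(u,v). u @ v) ` ({w. p w \<noteq> 0} \<times> {w. q w \<noteq> 0})"
      by (intro image_eqI[of _ _ "(take i w, drop i w)"]) auto
  qed
  then show ?thesis
    unfolding nc_fin_def by (rule finite_subset) (use assms in \<open>auto simp: nc_fin_def\<close>)
qed

section \<open>Ring laws of the free algebra\<close>

lemma nc_add_zero_left [simp]: "nc_add nc_zero p = p"
  by (simp add: nc_add_def nc_zero_def)

lemma nc_add_zero_right [simp]: "nc_add p nc_zero = p"
  by (simp add: nc_add_def nc_zero_def)

lemma nc_add_assoc: "nc_add (nc_add p q) r = nc_add p (nc_add q r)"
  by (simp add: nc_add_def add.assoc)

lemma nc_mul_zero_left [simp]: "nc_mul nc_zero p = nc_zero"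
  by (simp add: nc_mul_def nc_zero_def)

lemma nc_mul_zero_right [simp]: "nc_mul p nc_zero = nc_zero"
  by (simp add: nc_mul_def nc_zero_def)

lemma nc_mul_add_left: "nc_mul (nc_add p q) r = nc_add (nc_mul p r) (nc_mul q r)"
  by (simp add: nc_mul_def nc_add_def algebra_simps sum.distrib)

lemma nc_mul_add_right: "nc_mul r (nc_add p q) = nc_add (nc_mul r p) (nc_mul r q)"
  by (simp add: nc_mul_def nc_add_def algebra_simps sum.distrib)

lemma nc_mul_diff_left: "nc_mul (nc_diff p q) r = nc_diff (nc_mul p r) (nc_mul q r)"
  by (simp add: nc_mul_def nc_diff_def algebra_simps sum_subtractf)

lemma nc_mul_diff_right: "nc_mul r (nc_diff p q) = nc_diff (nc_mul r p) (nc_mul r q)"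
  by (simp add: nc_mul_def nc_diff_def algebra_simps sum_subtractf)

lemma nc_mul_scale_left: "nc_mul (nc_scale c p) r = nc_scale c (nc_mul p r)"
  by (simp add: nc_mul_def nc_scale_def algebra_simps sum_distrib_left)

lemma nc_mul_scale_right: "nc_mul r (nc_scale c p) = nc_scale c (nc_mul r p)"
  by (simp add: nc_mul_def nc_scale_def algebra_simps sum_distrib_left)

lemma nc_mul_one_left: "nc_mul nc_one p = p"
proof
  fix w
  have "nc_mul nc_one p w = (\<Sum>i\<in>{0}. nc_one (take i w) * p (drop i w))"
    unfolding nc_mul_def by (rule sum.mono_neutral_right) (auto simp: nc_one_def)
  then show "nc_mul nc_one p w = p w" by (simp add: nc_one_def)
qed

lemma nc_mul_one_right: "nc_mul p nc_one = p"
proof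
  fix w
  have "nc_mul p nc_one w = (\<Sum>i\<in>{length w}. p (take i w) * nc_one (drop i w))"
    unfolding nc_mul_def by (rule sum.mono_neutral_right) (auto simp: nc_one_def)
  then show "nc_mul p nc_one w = p w" by (simp add: nc_one_def)
qed

text \<open>Both sides are sums of \<open>p(w\<^sub>1) q(w\<^sub>2) r(w\<^sub>3)\<close> over the splittings
  \<open>w = w\<^sub>1 w\<^sub>2 w\<^sub>3\<close>, indexed by the cut points \<open>i \<le> j\<close> resp. by \<open>i\<close> and \<open>m = j - i\<close>.\<close>
lemma nc_mul_assoc: "nc_mul (nc_mul p q) r = nc_mul p (nc_mul q r)"
proof
  fix w :: "gen list"
  define n where "n = length w"
  define F where "F i m = p (take i w) * q (take m (drop i w)) * r (drop m (drop i w))" for i m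
  have "nc_mul (nc_mul p q) r w = (\<Sum>j\<le>n. \<Sum>i\<le>j. F i (j - i))"
    unfolding nc_mul_def n_def[symmetric]
  proof (rule sum.cong[OF refl])
    fix j assume "j \<in> {..n}"
    then have "length (take j w) = j" by (simp add: n_def)
    moreover have "p (take i (take j w)) * q (drop i (take j w)) * r (drop j w) = F i (j - i)"
      if "i \<le> j" for i
      using that by (simp add: F_def min_def drop_take)
    ultimately show "(\<Sum>i\<le>length (take j w). p (take i (take j w)) * q (drop i (take j w)))
        * r (drop j w) = (\<Sum>i\<le>j. F i (j - i))"
      by (simp add: sum_distrib_right)
  qed
  also have "\<dots> = (\<Sum>(i,m)\<in>{(i,m). i + m \<le> n}. F i m)"
    by (rule sum.triangle_reindex_eq[symmetric])
  also have "{(i,m). i + m \<le> n} = Sigma {..n} (\<lambda>i. {..n - i})"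
    by auto
  also have "(\<Sum>(i,m)\<in>Sigma {..n} (\<lambda>i. {..n - i}). F i m) = (\<Sum>i\<le>n. \<Sum>m\<le>n - i. F i m)"
    by (rule sum.Sigma[symmetric]) auto
  also have "\<dots> = nc_mul p (nc_mul q r) w"
    unfolding nc_mul_def by (simp add: F_def sum_distrib_left mult.assoc n_def)
  finally show "nc_mul (nc_mul p q) r w = nc_mul p (nc_mul q r) w" .
qed

lemma nc_lin_single_mul: "nc_mul (nc_lin [(c,u)]) (nc_lin [(d,v)]) = nc_lin [(c*d, u@v)]"
proof
  fix w :: "gen list"
  have split: "(if take i w = u then c else 0) * (if drop i w = v then d else 0)
      = (if i = length u then if u @ v = w then c * d else 0 else 0)" if "i \<le> length w" for i
  proof -
    have "take i w = u \<and> drop i w = v \<longleftrightarrow> i = length u \<and> u @ v = w"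
      using that append_take_drop_id[of i w] by (auto simp: min_def)
    then show ?thesis by auto
  qed
  have "nc_mul (nc_lin [(c,u)]) (nc_lin [(d,v)]) w
      = (\<Sum>i\<le>length w. if i = length u then if u @ v = w then c * d else 0 else 0)"
    unfolding nc_mul_def nc_lin_single by (rule sum.cong) (simp_all add: split)
  also have "\<dots> = nc_lin [(c*d, u@v)] w"
    by (auto simp: nc_lin_single)
  finally show "nc_mul (nc_lin [(c,u)]) (nc_lin [(d,v)]) w = nc_lin [(c*d, u@v)] w" .
qed

lemma nc_lin_mul: "nc_mul (nc_lin xs) (nc_lin ys) = nc_lin (lin_mul xs ys)"
proof (induction xs)
  case Nil
  then show ?case by (simp add: nc_lin_def nc_zero_def[symmetric] lin_mul_def)
next
  case (Cons x xs)
  have single: "nc_mul (nc_lin [x]) (nc_lin ys) = nc_lin (lin_mul [x] ys)"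
  proof (induction ys)
    case Nil
    then show ?case by (simp add: nc_lin_def nc_zero_def[symmetric] lin_mul_def)
  next
    case (Cons y ys)
    then show ?case
      using nc_lin_append[of "[y]" ys] nc_lin_append[of "lin_mul [x] [y]" "lin_mul [x] ys"]
      by (cases x, cases y) (simp add: nc_mul_add_right nc_lin_single_mul lin_mul_def)
  qed
  show ?case
    using nc_lin_append[of "[x]" xs] nc_lin_append[of "lin_mul [x] ys" "lin_mul xs ys"]
    by (simp add: nc_mul_add_left Cons single lin_mul_def)
qed

lemma nc_fin_induct [consumes 1, case_names zero add_monomial]:
  assumes "nc_fin p"
    and "P nc_zero"
    and "\<And>q c w. P q \<Longrightarrow> P (nc_add q (nc_scale c (nc_lin [(1,w)])))"
  shows "P p"
proof -
  have "\<forall>q. {w. q w \<noteq> 0} \<subseteq> S \<longrightarrow> P q" if "finite S" for S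
    using that
  proof (induction S rule: finite_induct)
    case empty
    have "q = nc_zero" if "{w. q w \<noteq> 0} \<subseteq> {}" for q :: ncp
      using that by (auto simp: nc_zero_def)
    then show ?case using assms(2) by blast
  next
    case (insert u S)
    show ?case
    proof (intro allI impI)
      fix q :: ncp assume "{w. q w \<noteq> 0} \<subseteq> insert u S"
      then have "{w. (q(u := 0)) w \<noteq> 0} \<subseteq> S" by auto
      then have "P (q(u := 0))" using insert.IH by blast
      moreover have "q = nc_add (q(u := 0)) (nc_scale (q u) (nc_lin [(1,u)]))"
        by (auto simp: nc_add_def nc_scale_def nc_lin_def)
      ultimately show "P q" using assms(3) by metis
    qed
  qed
  then show ?thesis using assms(1) unfolding nc_fin_def by blast
qed

section \<open>Two-sided ideals\<close>

lemma nc_ideal_generator: "g \<in> G \<Longrightarrow> nc_fin a \<Longrightarrow> nc_fin b \<Longrightarrow> nc_mul (nc_mul a g) b \<in> nc_ideal G"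
  using nc_ideal.step[OF nc_ideal.zero] by fastforce

lemma nc_ideal_add: "h \<in> nc_ideal G \<Longrightarrow> h' \<in> nc_ideal G \<Longrightarrow> nc_add h' h \<in> nc_ideal G"
proof (induction h rule: nc_ideal.induct)
  case (step h g a b)
  then show ?case using nc_ideal.step[of "nc_add h' h" G g a b] by (simp add: nc_add_assoc)
qed simp

lemma nc_ideal_scale: "h \<in> nc_ideal G \<Longrightarrow> nc_scale c h \<in> nc_ideal G"
proof (induction h rule: nc_ideal.induct)
  case zero
  have "nc_scale c nc_zero = nc_zero" by (simp add: nc_scale_def nc_zero_def)
  then show ?case by (simp add: nc_ideal.zero)
next
  case (step h g a b)
  have "nc_scale c (nc_add h (nc_mul (nc_mul a g) b))
      = nc_add (nc_scale c h) (nc_mul (nc_mul (nc_scale c a) g) b)"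
    by (simp add: nc_mul_scale_left) (simp add: nc_scale_def nc_add_def algebra_simps)
  then show ?case using step nc_ideal.step nc_fin_scale by simp
qed

lemma nc_ideal_mul_left: "h \<in> nc_ideal G \<Longrightarrow> nc_fin c \<Longrightarrow> nc_mul c h \<in> nc_ideal G"
proof (induction h rule: nc_ideal.induct)
  case (step h g a b)
  have "nc_mul c (nc_add h (nc_mul (nc_mul a g) b))
      = nc_add (nc_mul c h) (nc_mul (nc_mul (nc_mul c a) g) b)"
    by (simp add: nc_mul_add_right nc_mul_assoc)
  then show ?case using step nc_ideal.step nc_fin_mul by simp
qed (simp add: nc_ideal.zero)

lemma nc_ideal_mul_right: "h \<in> nc_ideal G \<Longrightarrow> nc_fin c \<Longrightarrow> nc_mul h c \<in> nc_ideal G"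
proof (induction h rule: nc_ideal.induct)
  case (step h g a b)
  have "nc_mul (nc_add h (nc_mul (nc_mul a g) b)) c
      = nc_add (nc_mul h c) (nc_mul (nc_mul a g) (nc_mul b c))"
    by (simp add: nc_mul_add_left nc_mul_assoc)
  then show ?case using step nc_ideal.step nc_fin_mul by simp
qed (simp add: nc_ideal.zero)

lemma additive_functional_vanishes_on_nc_ideal:
  fixes L :: "ncp \<Rightarrow> complex"
  assumes "h \<in> nc_ideal G"
    and "\<And>p q. L (nc_add p q) = L p + L q" and "L nc_zero = 0"
    and "\<And>g a b. g \<in> G \<Longrightarrow> L (nc_mul (nc_mul a g) b) = 0"
  shows "L h = 0"
  using assms(1) by induction (simp_all add: assms(2-4))

definition nc_comm :: "ncp \<Rightarrow> ncp \<Rightarrow> ncp" where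
  "nc_comm p q = nc_diff (nc_mul p q) (nc_mul q p)"

lemma nc_comm_add_right: "nc_comm p (nc_add q r) = nc_add (nc_comm p q) (nc_comm p r)"
  unfolding nc_comm_def nc_mul_add_left nc_mul_add_right
  by (simp add: nc_add_def nc_diff_def algebra_simps)

lemma nc_comm_scale_right: "nc_comm p (nc_scale c q) = nc_scale c (nc_comm p q)"
  unfolding nc_comm_def nc_mul_scale_left nc_mul_scale_right
  by (simp add: nc_scale_def nc_diff_def algebra_simps)

lemma nc_comm_mul_right: "nc_comm p (nc_mul q r) = nc_add (nc_mul (nc_comm p q) r) (nc_mul q (nc_comm p r))"
  unfolding nc_comm_def nc_mul_diff_left nc_mul_diff_right nc_mul_assoc
  by (simp add: nc_add_def nc_diff_def)

lemma nc_comm_one_right: "nc_comm p nc_one = nc_zero"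
  by (simp add: nc_comm_def nc_mul_one_left nc_mul_one_right nc_diff_def nc_zero_def)

lemma nc_comm_zero_right: "nc_comm p nc_zero = nc_zero"
  by (simp add: nc_comm_def) (simp add: nc_diff_def nc_zero_def)

lemma nc_comm_in_ideal_if_generators:
  assumes gens: "\<And>v. nc_comm p (nc_var v) \<in> nc_ideal G" and "nc_fin q"
  shows "nc_comm p q \<in> nc_ideal G"
proof -
  have monomial: "nc_comm p (nc_lin [(1,w)]) \<in> nc_ideal G" for w
  proof (induction w)
    case Nil
    then show ?case by (simp add: nc_one_eq_lin[symmetric] nc_comm_one_right nc_ideal.zero)
  next
    case (Cons v w)
    have "nc_lin [(1, v # w)] = nc_mul (nc_var v) (nc_lin [(1,w)])"
      by (simp add: nc_var_eq_lin nc_lin_single_mul)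
    then show ?case
      using Cons gens[of v]
      by (simp add: nc_comm_mul_right nc_ideal_add nc_ideal_mul_left nc_ideal_mul_right
          nc_fin_lin nc_var_eq_lin)
  qed
  from \<open>nc_fin q\<close> show ?thesis
  proof (induction q rule: nc_fin_induct)
    case zero
    then show ?case by (simp add: nc_comm_zero_right nc_ideal.zero)
  next
    case (add_monomial q c w)
    then show ?case by (simp add: nc_comm_add_right nc_comm_scale_right nc_ideal_add nc_ideal_scale monomial)
  qed
qed

section \<open>The invariant central cubic\<close>

definition heisenberg_cubic :: "complex \<Rightarrow> complex \<Rightarrow> ncp" where
  "heisenberg_cubic A B = nc_lin
     [(A,[X,Y,Z]), (A,[Z,X,Y]), (A,[Y,Z,X]), (B,[X,Z,Y]), (B,[Z,Y,X]), (B,[Y,X,Z])]"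

lemma heisenberg_cubic_support:
  "{u. heisenberg_cubic A B u \<noteq> 0} \<subseteq> set [[X,Y,Z],[Z,X,Y],[Y,Z,X],[X,Z,Y],[Z,Y,X],[Y,X,Z]]"
proof
  fix u assume "u \<in> {u. heisenberg_cubic A B u \<noteq> 0}"
  then have "u \<in> snd ` set [(A,[X,Y,Z]), (A,[Z,X,Y]), (A,[Y,Z,X]), (B,[X,Z,Y]), (B,[Z,Y,X]), (B,[Y,X,Z])]"
    using nc_lin_eq_0_if_notin unfolding heisenberg_cubic_def by blast
  then show "u \<in> set [[X,Y,Z],[Z,X,Y],[Y,Z,X],[X,Z,Y],[Z,Y,X],[Y,X,Z]]" by simp
qed

lemma cube_root_unity_simps:
  fixes w :: "'a::comm_ring_1"
  assumes "w ^ 3 = 1"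
  shows "w ^ 4 = w" "w * w = w ^ 2" "w * w ^ 2 = 1" "w ^ 2 * w = 1"
  using assms by (simp_all add: eval_nat_numeral mult.assoc)

lemma cube_root_unity_sum:
  fixes w :: "'a::idom"
  assumes "w ^ 3 = 1" "w \<noteq> 1"
  shows "1 + w + w ^ 2 = 0"
proof -
  have "(w - 1) * (1 + w + w ^ 2) = w ^ 3 - 1"
    by (simp add: algebra_simps power2_eq_square power3_eq_cube)
  then show ?thesis using assms by simp
qed

lemma nc_comm_heisenberg_cubic_X:
  fixes w A B :: complex
  assumes "w ^ 3 = 1"
  shows "nc_comm (heisenberg_cubic A B) (nc_var X) =
    nc_add (nc_mul (nc_mul (nc_lin [(1,[])]) (rel2 w A B)) (nc_lin [(1,[X])]))
   (nc_add (nc_mul (nc_mul (nc_lin [(-1,[X])]) (rel1 w A B)) (nc_lin [(1,[])]))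
   (nc_add (nc_mul (nc_mul (nc_lin [(A - A*w,[Y,Z])]) (nc_lin [(1,[X,X])])) (nc_lin [(1,[])]))
   (nc_add (nc_mul (nc_mul (nc_lin [(B - B*w^2,[Z,Y])]) (nc_lin [(1,[X,X])])) (nc_lin [(1,[])]))
   (nc_add (nc_mul (nc_mul (nc_lin [(A*w - A,[])]) (nc_lin [(1,[X,X])])) (nc_lin [(1,[Y,Z])]))
           (nc_mul (nc_mul (nc_lin [(B*w^2 - B,[])]) (nc_lin [(1,[X,X])])) (nc_lin [(1,[Z,Y])]))))))"
  unfolding nc_comm_def heisenberg_cubic_def nc_var_eq_lin rel1_def rel2_def
  by (simp only: nc_lin_mul nc_lin_append[symmetric] nc_lin_diff, rule nc_lin_eqI,
      simp add: lin_mul_def lin_scale_def, (elim disjE; simp add: nc_lin_def cube_root_unity_simps[OF assms]))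

lemma nc_comm_heisenberg_cubic_Y:
  fixes w A B :: complex
  assumes "w ^ 3 = 1"
  shows "nc_comm (heisenberg_cubic A B) (nc_var Y) =
    nc_add (nc_mul (nc_mul (nc_lin [(w,[])]) (rel2 w A B)) (nc_lin [(1,[Y])]))
   (nc_add (nc_mul (nc_mul (nc_lin [(- (w^2),[Y])]) (rel1 w A B)) (nc_lin [(1,[])]))
   (nc_add (nc_mul (nc_mul (nc_lin [(A - A*w,[Z,X])]) (nc_lin [(1,[Y,Y])])) (nc_lin [(1,[])]))
   (nc_add (nc_mul (nc_mul (nc_lin [(B - B*w^2,[X,Z])]) (nc_lin [(1,[Y,Y])])) (nc_lin [(1,[])]))
   (nc_add (nc_mul (nc_mul (nc_lin [(A*w - A,[])]) (nc_lin [(1,[Y,Y])])) (nc_lin [(1,[Z,X])]))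
           (nc_mul (nc_mul (nc_lin [(B*w^2 - B,[])]) (nc_lin [(1,[Y,Y])])) (nc_lin [(1,[X,Z])]))))))"
  unfolding nc_comm_def heisenberg_cubic_def nc_var_eq_lin rel1_def rel2_def
  by (simp only: nc_lin_mul nc_lin_append[symmetric] nc_lin_diff, rule nc_lin_eqI,
      simp add: lin_mul_def lin_scale_def, (elim disjE; simp add: nc_lin_def cube_root_unity_simps[OF assms]))

lemma nc_comm_heisenberg_cubic_Z:
  fixes w A B :: complex
  assumes "w ^ 3 = 1"
  shows "nc_comm (heisenberg_cubic A B) (nc_var Z) =
    nc_add (nc_mul (nc_mul (nc_lin [(w^2,[])]) (rel2 w A B)) (nc_lin [(1,[Z])]))
   (nc_add (nc_mul (nc_mul (nc_lin [(- w,[Z])]) (rel1 w A B)) (nc_lin [(1,[])]))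
   (nc_add (nc_mul (nc_mul (nc_lin [(A - A*w,[X,Y])]) (nc_lin [(1,[Z,Z])])) (nc_lin [(1,[])]))
   (nc_add (nc_mul (nc_mul (nc_lin [(B - B*w^2,[Y,X])]) (nc_lin [(1,[Z,Z])])) (nc_lin [(1,[])]))
   (nc_add (nc_mul (nc_mul (nc_lin [(A*w - A,[])]) (nc_lin [(1,[Z,Z])])) (nc_lin [(1,[X,Y])]))
           (nc_mul (nc_mul (nc_lin [(B*w^2 - B,[])]) (nc_lin [(1,[Z,Z])])) (nc_lin [(1,[Y,X])]))))))"
  unfolding nc_comm_def heisenberg_cubic_def nc_var_eq_lin rel1_def rel2_def
  by (simp only: nc_lin_mul nc_lin_append[symmetric] nc_lin_diff, rule nc_lin_eqI,
      simp add: lin_mul_def lin_scale_def, (elim disjE; simp add: nc_lin_def cube_root_unity_simps[OF assms]))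

lemma nc_comm_heisenberg_cubic_var:
  fixes w A B :: complex
  assumes "w ^ 3 = 1"
  shows "nc_comm (heisenberg_cubic A B) (nc_var v) \<in> T_ideal w A B"
  unfolding T_ideal_def
  by (cases v, simp_all only: nc_comm_heisenberg_cubic_X[OF assms]
        nc_comm_heisenberg_cubic_Y[OF assms] nc_comm_heisenberg_cubic_Z[OF assms])
    (intro nc_ideal_add nc_ideal_generator; simp add: nc_fin_lin)+

definition cyclic_coeff_sum :: "gen list \<Rightarrow> ncp \<Rightarrow> complex" where
  "cyclic_coeff_sum u p = p u + p (rotate1 u) + p (rotate1 (rotate1 u))"

lemma cyclic_coeff_sum_T_ideal:
  fixes w A B :: complex
  assumes "1 + w + w ^ 2 = 0" and "u \<in> {[X,Y,Z], [X,Z,Y]}" and "h \<in> T_ideal w A B"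
  shows "cyclic_coeff_sum u h = 0"
  using \<open>h \<in> T_ideal w A B\<close> unfolding T_ideal_def
proof (rule additive_functional_vanishes_on_nc_ideal)
  have ww: "w * w = - 1 - w"
    using assms(1) by (simp add: power2_eq_square eq_neg_iff_add_eq_0 algebra_simps)
  fix g a b
  assume "g \<in> {nc_lin [(1,[X,X])], nc_lin [(1,[Y,Y])], nc_lin [(1,[Z,Z])], rel1 w A B, rel2 w A B}"
  with assms(2) show "cyclic_coeff_sum u (nc_mul (nc_mul a g) b) = 0"
    by (auto simp: cyclic_coeff_sum_def nc_mul_def rel1_def rel2_def nc_lin_def
        eval_nat_numeral atMost_Suc ww algebra_simps)
qed (simp_all add: cyclic_coeff_sum_def nc_add_def nc_zero_def)

lemma heisenberg_cubic_notin_T_ideal: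
  fixes w A B :: complex
  assumes "1 + w + w ^ 2 = 0" and "(A, B) \<noteq> (0, 0)"
  shows "heisenberg_cubic A B \<notin> T_ideal w A B"
proof
  assume "heisenberg_cubic A B \<in> T_ideal w A B"
  then have "cyclic_coeff_sum [X,Y,Z] (heisenberg_cubic A B) = 0"
    and "cyclic_coeff_sum [X,Z,Y] (heisenberg_cubic A B) = 0"
    using cyclic_coeff_sum_T_ideal[OF assms(1)] by auto
  then have "3 * A = 0" "3 * B = 0"
    by (simp_all add: cyclic_coeff_sum_def heisenberg_cubic_def nc_lin_def)
  with assms(2) show False by simp
qed

lemma nc_subst_eq_sum_list:
  assumes "{w. p w \<noteq> 0} \<subseteq> set ws" and "distinct ws"
  shows "nc_subst f p u = (\<Sum>w\<leftarrow>ws. p w * nc_prodlist (map f w) u)"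
proof -
  have "nc_subst f p u = (\<Sum>w\<in>set ws. p w * nc_prodlist (map f w) u)"
    unfolding nc_subst_def by (rule sum.mono_neutral_left) (use assms in auto)
  also have "\<dots> = (\<Sum>w\<leftarrow>ws. p w * nc_prodlist (map f w) u)"
    using assms(2) by (rule sum.distinct_set_conv_list)
  finally show ?thesis .
qed

lemma nc_subst_e1_heisenberg_cubic: "nc_subst e1_act (heisenberg_cubic A B) = heisenberg_cubic A B"
proof
  fix u
  show "nc_subst e1_act (heisenberg_cubic A B) u = heisenberg_cubic A B u"
    apply (subst nc_subst_eq_sum_list[OF heisenberg_cubic_support], simp)
    apply (simp add: nc_prodlist_def e1_act_def nc_var_eq_lin nc_one_eq_lin nc_lin_mul lin_mul_def)
    apply (cases "u \<in> set [[X,Y,Z],[Z,X,Y],[Y,Z,X],[X,Z,Y],[Z,Y,X],[Y,X,Z]]")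
     apply (simp only: set_simps insert_iff empty_iff)
     apply (elim disjE; simp add: nc_lin_def heisenberg_cubic_def)
    apply (simp add: nc_lin_eq_0_if_notin heisenberg_cubic_def)
    done
qed

lemma nc_subst_e2_heisenberg_cubic:
  fixes w :: complex
  assumes "w ^ 3 = 1"
  shows "nc_subst (e2_act w) (heisenberg_cubic A B) = heisenberg_cubic A B"
proof
  fix u
  show "nc_subst (e2_act w) (heisenberg_cubic A B) u = heisenberg_cubic A B u"
    apply (subst nc_subst_eq_sum_list[OF heisenberg_cubic_support], simp)
    apply (simp add: nc_prodlist_def e2_act_def nc_var_eq_lin nc_one_eq_lin nc_lin_mul lin_mul_def
        nc_lin_scale lin_scale_def)
    apply (cases "u \<in> set [[X,Y,Z],[Z,X,Y],[Y,Z,X],[X,Z,Y],[Z,Y,X],[Y,X,Z]]")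
     apply (simp only: set_simps insert_iff empty_iff)
     apply (elim disjE; simp add: nc_lin_def heisenberg_cubic_def cube_root_unity_simps[OF assms])
    apply (simp add: nc_lin_eq_0_if_notin heisenberg_cubic_def)
    done
qed

theorem mainTheorem2:
  fixes \<omega> A B :: complex
  assumes "\<omega> ^ 3 = 1" and "\<omega> \<noteq> 1"
    and "(A, B) \<noteq> (0, 0)"
  shows "\<exists>p. nc_fin p \<and> homog 3 p
      \<and> p \<notin> T_ideal \<omega> A B
      \<and> (\<forall>q. nc_fin q \<longrightarrow> nc_diff (nc_mul p q) (nc_mul q p) \<in> T_ideal \<omega> A B)
      \<and> nc_diff (nc_subst e1_act p) p \<in> T_ideal \<omega> A B
      \<and> nc_diff (nc_subst (e2_act \<omega>) p) p \<in> T_ideal \<omega> A B"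
proof (intro exI conjI allI impI)
  let ?p = "heisenberg_cubic A B"
  have diff_self: "nc_diff q q \<in> T_ideal \<omega> A B" for q
    unfolding T_ideal_def using nc_ideal.zero by (simp add: nc_diff_def nc_zero_def)
  show "nc_fin ?p"
    unfolding heisenberg_cubic_def by (rule nc_fin_lin)
  show "homog 3 ?p"
    unfolding homog_def using heisenberg_cubic_support by fastforce
  show "?p \<notin> T_ideal \<omega> A B"
    using heisenberg_cubic_notin_T_ideal cube_root_unity_sum assms by blast
  show "nc_diff (nc_mul ?p q) (nc_mul q ?p) \<in> T_ideal \<omega> A B" if "nc_fin q" for q
    using nc_comm_in_ideal_if_generators[OF nc_comm_heisenberg_cubic_var[OF assms(1), unfolded T_ideal_def] that]
    by (simp add: nc_comm_def T_ideal_def)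
  show "nc_diff (nc_subst e1_act ?p) ?p \<in> T_ideal \<omega> A B"
    using diff_self by (simp add: nc_subst_e1_heisenberg_cubic)
  show "nc_diff (nc_subst (e2_act \<omega>) ?p) ?p \<in> T_ideal \<omega> A B"
    using diff_self by (simp add: nc_subst_e2_heisenberg_cubic[OF assms(1)])
qed

end
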